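(* In the model described in the context, assume $n_i\ge 2$ for all $i$. The estimator $A_1=\frac{1}{\sum_{i=1}^a(n_i-1)n_i}\sum_{i=1}^a\sum_{1\le\ell_1<\ell_2\le n_i}(\boldsymbol X_{i,\ell_1}-\boldsymbol X_{i,\ell_2})^\top\boldsymbol T_S(\boldsymbol X_{i,\ell_1}-\boldsymbol X_{i,\ell_2})$ satisfies $E(A_1)=\operatorname{tr}(\boldsymbol T_S\boldsymbol\Sigma)$ (under the null hypothesis and under alternatives), and in each of the asymptotic frameworks (I)–(V) it is ratio consistent: $A_1/\operatorname{tr}(\boldsymbol T_S\boldsymbol\Sigma)\to1$ in probability.
   Context: Model: there are $a$ independent groups; for $i=1,\dots,a$ and $j=1,\dots,n_i$ the observations $\boldsymbol X_{i,j}\in\mathbb R^d$ are independent with $\boldsymbol X_{i,j}\sim\mathcal N_d(\boldsymbol\mu_i,\boldsymbol\Sigma)$, where $\boldsymbol\Sigma$ is a common positive definite $d\times d$ matrix. $N=\sum_i n_i$, $n_{\max}=\max_i n_i$. $\boldsymbol T_S$ is a nonzero $d\times d$ symmetric idempotent matrix. Asymptotic frameworks: all of $a,d,n_1,\dots,n_a,\boldsymbol\Sigma,\boldsymbol\mu_i,\boldsymbol T_S$ may depend on an index along which $N\to\infty$, and one of the following holds (quantities not listed stay bounded): (I) $a\to\infty$; (II) $a,d\to\infty$; (III) $a,n_{\max}\to\infty$; (IV) $d,n_{\max}\to\infty$; (V) $a,d,n_{\max}\to\infty$. *)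

theory Defs
  imports "HOL-Probability.Probability"
begin

text \<open>Vectors in R^d are functions nat => real (only indices k < d matter);
d x d matrices are functions nat => nat => real (only indices k, l < d matter).\<close>

definition sym_mat :: "nat \<Rightarrow> (nat \<Rightarrow> nat \<Rightarrow> real) \<Rightarrow> bool" where
  "sym_mat d S \<longleftrightarrow> (\<forall>k<d. \<forall>l<d. S k l = S l k)"

definition quad_form :: "nat \<Rightarrow> (nat \<Rightarrow> nat \<Rightarrow> real) \<Rightarrow> (nat \<Rightarrow> real) \<Rightarrow> real" where
  "quad_form d S x = (\<Sum>k<d. \<Sum>l<d. x k * S k l * x l)"

definition pos_def_mat :: "nat \<Rightarrow> (nat \<Rightarrow> nat \<Rightarrow> real) \<Rightarrow> bool" where
  "pos_def_mat d S \<longleftrightarrow> sym_mat d S \<and>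
     (\<forall>x. (\<exists>k<d. x k \<noteq> 0) \<longrightarrow> quad_form d S x > 0)"

definition sym_idempotent_nonzero :: "nat \<Rightarrow> (nat \<Rightarrow> nat \<Rightarrow> real) \<Rightarrow> bool" where
  "sym_idempotent_nonzero d T \<longleftrightarrow> sym_mat d T \<and>
     (\<forall>k<d. \<forall>l<d. (\<Sum>m<d. T k m * T m l) = T k l) \<and>
     (\<exists>k<d. \<exists>l<d. T k l \<noteq> 0)"

definition trace_prod :: "nat \<Rightarrow> (nat \<Rightarrow> nat \<Rightarrow> real) \<Rightarrow> (nat \<Rightarrow> nat \<Rightarrow> real) \<Rightarrow> real" where
  "trace_prod d A B = (\<Sum>k<d. \<Sum>l<d. A k l * B l k)"

definition mvn :: "'w measure \<Rightarrow> nat \<Rightarrow> (nat \<Rightarrow> 'w \<Rightarrow> real) \<Rightarrow> (nat \<Rightarrow> real)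
    \<Rightarrow> (nat \<Rightarrow> nat \<Rightarrow> real) \<Rightarrow> bool" where
  "mvn M d Y mu S \<longleftrightarrow>
     (\<forall>t. (\<exists>k<d. t k \<noteq> 0) \<longrightarrow>
        distributed M lborel (\<lambda>w. \<Sum>k<d. t k * Y k w)
          (normal_density (\<Sum>k<d. t k * mu k) (sqrt (quad_form d S t))))"

text \<open>The model: groups i < a, observations j < n i, coordinates k < d (0-based).\<close>
definition model :: "'w measure \<Rightarrow> nat \<Rightarrow> nat \<Rightarrow> (nat \<Rightarrow> nat)
    \<Rightarrow> (nat \<Rightarrow> nat \<Rightarrow> nat \<Rightarrow> 'w \<Rightarrow> real) \<Rightarrow> (nat \<Rightarrow> nat \<Rightarrow> real)
    \<Rightarrow> (nat \<Rightarrow> nat \<Rightarrow> real) \<Rightarrow> bool" where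
  "model M a d n X mu S \<longleftrightarrow>
     prob_space M \<and> pos_def_mat d S \<and>
     prob_space.indep_vars M (\<lambda>_. Pi\<^sub>M {..<d} (\<lambda>_. borel))
        (\<lambda>(i, j) w. restrict (\<lambda>k. X i j k w) {..<d}) {(i, j). i < a \<and> j < n i} \<and>
     (\<forall>i<a. \<forall>j<n i. mvn M d (X i j) (mu i) S)"

definition estA1 :: "nat \<Rightarrow> nat \<Rightarrow> (nat \<Rightarrow> nat) \<Rightarrow> (nat \<Rightarrow> nat \<Rightarrow> real)
    \<Rightarrow> (nat \<Rightarrow> nat \<Rightarrow> nat \<Rightarrow> 'w \<Rightarrow> real) \<Rightarrow> 'w \<Rightarrow> real" where
  "estA1 a d n T X w =
     (1 / (\<Sum>i<a. real (n i - 1) * real (n i))) *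
     (\<Sum>i<a. \<Sum>l2<n i. \<Sum>l1<l2.
        (\<Sum>k<d. \<Sum>l<d. (X i l1 k w - X i l2 k w) * T k l * (X i l1 l w - X i l2 l w)))"

definition nmax :: "nat \<Rightarrow> (nat \<Rightarrow> nat) \<Rightarrow> nat" where
  "nmax a n = Max (n ` {..<a})"

definition tends_inf :: "(nat \<Rightarrow> nat) \<Rightarrow> bool" where
  "tends_inf f \<longleftrightarrow> filterlim f at_top sequentially"

definition bdd_seq :: "(nat \<Rightarrow> nat) \<Rightarrow> bool" where
  "bdd_seq f \<longleftrightarrow> (\<exists>C. \<forall>\<nu>. f \<nu> \<le> C)"

definition asymptotic_framework :: "(nat \<Rightarrow> nat) \<Rightarrow> (nat \<Rightarrow> nat) \<Rightarrow> (nat \<Rightarrow> nat \<Rightarrow> nat) \<Rightarrow> bool" where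
  "asymptotic_framework a d n \<longleftrightarrow>
     (let N = (\<lambda>\<nu>. \<Sum>i<a \<nu>. n \<nu> i); nm = (\<lambda>\<nu>. nmax (a \<nu>) (n \<nu>)) in
      tends_inf N \<and>
      ((tends_inf a \<and> bdd_seq d \<and> bdd_seq nm) \<or>
       (tends_inf a \<and> tends_inf d \<and> bdd_seq nm) \<or>
       (tends_inf a \<and> bdd_seq d \<and> tends_inf nm) \<or>
       (bdd_seq a \<and> tends_inf d \<and> tends_inf nm) \<or>
       (tends_inf a \<and> tends_inf d \<and> tends_inf nm)))"

definition conv_in_prob :: "(nat \<Rightarrow> 'w measure) \<Rightarrow> (nat \<Rightarrow> 'w \<Rightarrow> real) \<Rightarrow> real \<Rightarrow> bool" where
  "conv_in_prob M Y c \<longleftrightarrow>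
     (\<forall>e>0. (\<lambda>\<nu>. measure (M \<nu>) {w \<in> space (M \<nu>). \<bar>Y \<nu> w - c\<bar> > e}) \<longlonglongrightarrow> 0)"

end

theory Submission
  imports Defs
begin

(* Write Z_p = T (X_p - mu_i) for the observation p = (i, j). As T is a symmetric projection, the
   summand of A_1 for l1 < l2 equals |Z_(i,l1)|^2 + |Z_(i,l2)|^2 - 2 <Z_(i,l1), Z_(i,l2)>, and every
   observation occurs in n_i - 1 pairs, so with D = sum_i (n_i - 1) n_i and tau = tr (T Sigma)

     A_1 - tau = (B - 2 C) / D,   B = sum_p (n_i - 1) (|Z_p|^2 - tau),   C = sum_(pairs) <Z_p, Z_q>.

   Independence and the Gaussian moments of Z_p (E |Z_p|^2 = tau, E |Z_p|^4 <= 3 tau^2) make the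
   summands of B, and those of C, centred and pairwise uncorrelated; this gives E A_1 = tau,
   E B^2 <= 2 tau^2 D^(3/2) and E C^2 <= tau^2 D. As D >= N, Chebyshev's inequality yields
   P(|A_1 / tau - 1| > e) <= (4 / sqrt N + 8 / N) / e^2, which tends to 0 as soon as N does; this is
   all that is used of the frameworks (I)-(V). *)

lemma abs_mult4_le_sum_power4: "\<bar>a * b * c * e\<bar> \<le> a^4 + b^4 + c^4 + (e::real)^4"
proof -
  have ab: "2 * (a^2 * b^2) \<le> a^4 + b^4" and ce: "2 * (c^2 * e^2) \<le> c^4 + e^4"
    using sum_squares_bound[of "a^2" "b^2"] sum_squares_bound[of "c^2" "e^2"]
    by (simp_all flip: power_mult)
  have "2 * (\<bar>a * b\<bar> * \<bar>c * e\<bar>) \<le> \<bar>a * b\<bar>^2 + \<bar>c * e\<bar>^2"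
    using sum_squares_bound[of "\<bar>a * b\<bar>" "\<bar>c * e\<bar>"] by simp
  then have "2 * \<bar>a * b * c * e\<bar> \<le> a^2 * b^2 + c^2 * e^2"
    by (simp add: abs_mult power_mult_distrib mult.assoc)
  moreover have "0 \<le> a^4 + b^4 + c^4 + e^4"
    by simp
  ultimately show ?thesis
    using ab ce by linarith
qed

lemma mult_le_weighted_squares:
  fixes A B L :: real
  assumes "L > 0"
  shows "A * B \<le> (L * A^2 + B^2 / L) / 2"
proof -
  have "2 * (sqrt L * A) * (B / sqrt L) \<le> (sqrt L * A)^2 + (B / sqrt L)^2"
    by (rule sum_squares_bound)
  with assms show ?thesis
    by (simp add: power_mult_distrib power_divide)
qed

lemma sum_lower_pairs_add:
  "(\<Sum>l2<N. \<Sum>l1<l2. f l1 + f l2) = real (N - 1) * (\<Sum>j<N. (f j :: real))"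
proof (induction N)
  case (Suc N)
  have "(\<Sum>l2<Suc N. \<Sum>l1<l2. f l1 + f l2)
        = real (N - 1) * (\<Sum>j<N. f j) + ((\<Sum>j<N. f j) + real N * f N)"
    using Suc by (simp add: sum.distrib)
  also have "\<dots> = real (Suc N - 1) * (\<Sum>j<Suc N. f j)"
    by (cases N) (simp_all add: algebra_simps)
  finally show ?case .
qed simp

lemma integrable_mult4_if_power4:
  fixes f1 f2 f3 f4 :: "'a \<Rightarrow> real"
  assumes [measurable]: "f1 \<in> borel_measurable M" "f2 \<in> borel_measurable M"
    "f3 \<in> borel_measurable M" "f4 \<in> borel_measurable M"
  and "integrable M (\<lambda>w. f1 w ^ 4)" "integrable M (\<lambda>w. f2 w ^ 4)"
    "integrable M (\<lambda>w. f3 w ^ 4)" "integrable M (\<lambda>w. f4 w ^ 4)"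
  shows "integrable M (\<lambda>w. f1 w * f2 w * f3 w * f4 w)"
proof (rule Bochner_Integration.integrable_bound)
  show "integrable M (\<lambda>w. f1 w ^ 4 + f2 w ^ 4 + f3 w ^ 4 + f4 w ^ 4)"
    using assms by auto
  show "AE w in M. norm (f1 w * f2 w * f3 w * f4 w)
          \<le> norm (f1 w ^ 4 + f2 w ^ 4 + f3 w ^ 4 + f4 w ^ 4)"
    using abs_mult4_le_sum_power4 by (intro AE_I2) (simp add: add_nonneg_nonneg)
qed measurable

lemma integral_sum_sum:
  fixes f :: "'i \<Rightarrow> 'j \<Rightarrow> 'a \<Rightarrow> real"
  assumes "finite A" "finite B" "\<And>i j. i \<in> A \<Longrightarrow> j \<in> B \<Longrightarrow> integrable M (f i j)"
  shows "(\<integral>w. (\<Sum>i\<in>A. \<Sum>j\<in>B. f i j w) \<partial>M) = (\<Sum>i\<in>A. \<Sum>j\<in>B. \<integral>w. f i j w \<partial>M)"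
proof -
  have "(\<integral>w. (\<Sum>i\<in>A. \<Sum>j\<in>B. f i j w) \<partial>M) = (\<Sum>i\<in>A. \<integral>w. (\<Sum>j\<in>B. f i j w) \<partial>M)"
    by (rule Bochner_Integration.integral_sum) (use assms in auto)
  also have "\<dots> = (\<Sum>i\<in>A. \<Sum>j\<in>B. \<integral>w. f i j w \<partial>M)"
    by (intro sum.cong refl Bochner_Integration.integral_sum) (use assms in auto)
  finally show ?thesis .
qed

lemma integral_square_sum_orthogonal:
  fixes f :: "'i \<Rightarrow> 'a \<Rightarrow> real"
  assumes A: "finite A"
    and int: "\<And>s t. s \<in> A \<Longrightarrow> t \<in> A \<Longrightarrow> integrable M (\<lambda>w. f s w * f t w)"
    and orth: "\<And>s t. s \<in> A \<Longrightarrow> t \<in> A \<Longrightarrow> s \<noteq> t \<Longrightarrow> (\<integral>w. f s w * f t w \<partial>M) = 0"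
  shows "integrable M (\<lambda>w. (\<Sum>t\<in>A. f t w)^2)"
    and "(\<integral>w. (\<Sum>t\<in>A. f t w)^2 \<partial>M) = (\<Sum>t\<in>A. \<integral>w. (f t w)^2 \<partial>M)"
proof -
  have sq: "(\<lambda>w. (\<Sum>t\<in>A. f t w)^2) = (\<lambda>w. \<Sum>s\<in>A. \<Sum>t\<in>A. f s w * f t w)"
    by (simp add: power2_eq_square sum_product)
  show "integrable M (\<lambda>w. (\<Sum>t\<in>A. f t w)^2)"
    unfolding sq using int by auto
  have "(\<integral>w. (\<Sum>t\<in>A. f t w)^2 \<partial>M) = (\<Sum>s\<in>A. \<Sum>t\<in>A. \<integral>w. f s w * f t w \<partial>M)"
    unfolding sq using A A int by (rule integral_sum_sum)
  also have "\<dots> = (\<Sum>s\<in>A. \<integral>w. f s w * f s w \<partial>M)"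
  proof (rule sum.cong[OF refl])
    fix s assume s: "s \<in> A"
    have "(\<Sum>t\<in>A. \<integral>w. f s w * f t w \<partial>M) = (\<Sum>t\<in>A. if t = s then \<integral>w. f s w * f s w \<partial>M else 0)"
      using orth s by (intro sum.cong) auto
    then show "(\<Sum>t\<in>A. \<integral>w. f s w * f t w \<partial>M) = \<integral>w. f s w * f s w \<partial>M"
      using A s by simp
  qed
  finally show "(\<integral>w. (\<Sum>t\<in>A. f t w)^2 \<partial>M) = (\<Sum>t\<in>A. \<integral>w. (f t w)^2 \<partial>M)"
    by (simp add: power2_eq_square)
qed

lemma (in prob_space) normal_central_moments:
  assumes D: "distributed M lborel Y (\<lambda>x. ennreal (normal_density c s x))" and s: "0 < s"
  shows "integrable M (\<lambda>w. (Y w - c) ^ k)"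
    and "expectation (\<lambda>w. Y w - c) = 0"
    and "expectation (\<lambda>w. (Y w - c)^2) = s^2"
    and "expectation (\<lambda>w. (Y w - c)^4) = 3 * s^4"
proof -
  have moment: "expectation (\<lambda>w. (Y w - c)^j) = integral\<^sup>L lborel (\<lambda>x. normal_density c s x * (x - c)^j)" for j
    using distributed_integral[OF D, of "\<lambda>x. (x - c)^j"] by simp
  show "integrable M (\<lambda>w. (Y w - c) ^ k)"
    using distributed_integrable[OF D, of "\<lambda>x. (x - c)^k"] integrable_normal_moment[OF s] by simp
  show "expectation (\<lambda>w. Y w - c) = 0"
    using moment[of "2 * 0 + 1"] integral_normal_moment_odd[OF s, of c 0] by simp
  show "expectation (\<lambda>w. (Y w - c)^2) = s^2"
    using moment[of "2 * 1"] integral_normal_moment_even[OF s, of c 1] s by simp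
  show "expectation (\<lambda>w. (Y w - c)^4) = 3 * s^4"
    using moment[of "2 * 2"] integral_normal_moment_even[OF s, of c 2] s
    by (simp add: fact_numeral power_divide field_simps)
qed

lemma conv_in_prob_if_Chebyshev_bound:
  fixes Y :: "nat \<Rightarrow> 'w \<Rightarrow> real"
  assumes bound: "\<And>\<nu> e. e > 0 \<Longrightarrow>
      measure (M \<nu>) {w \<in> space (M \<nu>). \<bar>Y \<nu> w - c\<bar> > e} \<le> r \<nu> / e^2"
    and r: "r \<longlonglongrightarrow> 0"
  shows "conv_in_prob M Y c"
  unfolding conv_in_prob_def
proof (intro allI impI)
  fix e :: real assume e: "e > 0"
  have lim: "(\<lambda>\<nu>. r \<nu> / e^2) \<longlonglongrightarrow> 0"
    using tendsto_divide[OF r tendsto_const, of "e^2"] e by simp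
  show "(\<lambda>\<nu>. measure (M \<nu>) {w \<in> space (M \<nu>). \<bar>Y \<nu> w - c\<bar> > e}) \<longlonglongrightarrow> 0"
  proof (rule tendsto_sandwich[OF _ _ tendsto_const lim])
    show "\<forall>\<^sub>F \<nu> in sequentially. 0 \<le> measure (M \<nu>) {w \<in> space (M \<nu>). \<bar>Y \<nu> w - c\<bar> > e}"
      by simp
    show "\<forall>\<^sub>F \<nu> in sequentially.
        measure (M \<nu>) {w \<in> space (M \<nu>). \<bar>Y \<nu> w - c\<bar> > e} \<le> r \<nu> / e^2"
      using bound[OF e] by simp
  qed
qed

lemma tendsto_div_sqrt_add_div_at_top:
  fixes f :: "'a \<Rightarrow> real"
  assumes f: "filterlim f at_top F"
  shows "((\<lambda>x. A / sqrt (f x) + B / f x) \<longlongrightarrow> 0) F"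
proof -
  have "filterlim (\<lambda>x. sqrt (f x)) at_top F"
    by (rule filterlim_compose[OF sqrt_at_top f])
  then have "((\<lambda>x. A / sqrt (f x)) \<longlongrightarrow> 0) F"
    by (intro tendsto_divide_0[OF tendsto_const] filterlim_at_top_imp_at_infinity)
  moreover have "((\<lambda>x. B / f x) \<longlongrightarrow> 0) F"
    using f by (intro tendsto_divide_0[OF tendsto_const] filterlim_at_top_imp_at_infinity)
  ultimately show ?thesis
    using tendsto_add by fastforce
qed

locale grouped_normal_model = prob_space M for M :: "'w measure" +
  fixes a d :: nat and n :: "nat \<Rightarrow> nat" and X :: "nat \<Rightarrow> nat \<Rightarrow> nat \<Rightarrow> 'w \<Rightarrow> real"
    and mu :: "nat \<Rightarrow> nat \<Rightarrow> real" and S T :: "nat \<Rightarrow> nat \<Rightarrow> real"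
  assumes model: "model M a d n X mu S"
    and a_pos: "a \<ge> 1"
    and n_ge2: "\<And>i. i < a \<Longrightarrow> n i \<ge> 2"
    and T_proj: "sym_idempotent_nonzero d T"
begin

definition "obs = Sigma {..<a} (\<lambda>i. {..<n i})"

definition "obs_vec p w = restrict (\<lambda>k. X (fst p) (snd p) k w) {..<d}"

definition "proj_dev p m w = (\<Sum>k<d. T m k * (X (fst p) (snd p) k w - mu (fst p) k))"

definition "proj_dev_of p m v = (\<Sum>k<d. T m k * (v k - mu (fst p) k))"

definition "proj_var m = quad_form d S (\<lambda>k. T m k)"

definition "tau = trace_prod d T S"

definition "proj_sqnorm p w = (\<Sum>m<d. (proj_dev p m w)^2)"

definition "proj_inner p p' w = (\<Sum>m<d. proj_dev p m w * proj_dev p' m w)"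

lemma finite_obs [simp]: "finite obs"
  unfolding obs_def by auto

lemma indep_obs_vec: "indep_vars (\<lambda>_. PiM {..<d} (\<lambda>_. borel)) obs_vec obs"
proof -
  have "indep_vars (\<lambda>_. PiM {..<d} (\<lambda>_. borel))
      (\<lambda>(i, j) w. restrict (\<lambda>k. X i j k w) {..<d}) {(i, j). i < a \<and> j < n i}"
    using model unfolding model_def by auto
  moreover have "{(i, j). i < a \<and> j < n i} = obs"
    unfolding obs_def by auto
  ultimately show ?thesis
    by (rule indep_vars_cong[THEN iffD1, rotated 3]) (auto simp: obs_vec_def split: prod.splits)
qed

lemma obs_vec_measurable: "p \<in> obs \<Longrightarrow> obs_vec p \<in> measurable M (PiM {..<d} (\<lambda>_. borel))"
  using indep_obs_vec unfolding indep_vars_def by auto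

lemma proj_dev_of_measurable [measurable]:
  "proj_dev_of p m \<in> borel_measurable (PiM {..<d} (\<lambda>_. borel))"
  unfolding proj_dev_of_def by measurable

lemma proj_dev_eq: "proj_dev p m w = proj_dev_of p m (obs_vec p w)"
  unfolding proj_dev_def proj_dev_of_def obs_vec_def by (intro sum.cong) auto

lemma proj_dev_measurable [measurable]: "p \<in> obs \<Longrightarrow> proj_dev p m \<in> borel_measurable M"
  unfolding proj_dev_eq[abs_def] by (rule measurable_compose[OF obs_vec_measurable proj_dev_of_measurable])

lemma S_sym: "k < d \<Longrightarrow> l < d \<Longrightarrow> S k l = S l k"
  using model unfolding model_def pos_def_mat_def sym_mat_def by auto

lemma T_sym: "k < d \<Longrightarrow> l < d \<Longrightarrow> T k l = T l k"
  using T_proj unfolding sym_idempotent_nonzero_def sym_mat_def by auto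

lemma T_idem: "k < d \<Longrightarrow> l < d \<Longrightarrow> (\<Sum>m<d. T k m * T m l) = T k l"
  using T_proj unfolding sym_idempotent_nonzero_def by auto

lemma proj_var_pos: "\<exists>k<d. T m k \<noteq> 0 \<Longrightarrow> proj_var m > 0"
  using model unfolding model_def pos_def_mat_def proj_var_def by auto

lemma proj_var_nonneg: "proj_var m \<ge> 0"
  using proj_var_pos[of m] unfolding proj_var_def quad_form_def by force

lemma proj_dev_eq_0: "proj_var m = 0 \<Longrightarrow> proj_dev p m w = 0"
  using proj_var_pos[of m] unfolding proj_dev_def by force

lemma tau_eq_sum_proj_var: "tau = (\<Sum>m<d. proj_var m)"
proof -
  have "(\<Sum>m<d. proj_var m) = (\<Sum>m<d. \<Sum>k<d. \<Sum>l<d. T m k * S k l * T m l)"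
    unfolding proj_var_def quad_form_def by simp
  also have "\<dots> = (\<Sum>k<d. \<Sum>l<d. \<Sum>m<d. T m k * S k l * T m l)"
    by (subst sum.swap) (intro sum.cong refl sum.swap)
  also have "\<dots> = (\<Sum>k<d. \<Sum>l<d. S k l * (\<Sum>m<d. T k m * T m l))"
    by (intro sum.cong refl) (auto simp: sum_distrib_left T_sym mult_ac)
  also have "\<dots> = (\<Sum>k<d. \<Sum>l<d. T k l * S l k)"
    by (intro sum.cong refl) (auto simp: T_idem S_sym)
  finally show ?thesis
    unfolding tau_def trace_prod_def by simp
qed

lemma tau_pos: "tau > 0"
proof -
  obtain k l where kl: "k < d" "l < d" "T k l \<noteq> 0"
    using T_proj unfolding sym_idempotent_nonzero_def by auto
  have "0 < proj_var k"
    using proj_var_pos kl by auto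
  also have "\<dots> \<le> (\<Sum>m<d. proj_var m)"
    by (rule member_le_sum) (use kl proj_var_nonneg in auto)
  finally show ?thesis
    unfolding tau_eq_sum_proj_var .
qed

lemma proj_dev_shifted_normal:
  assumes p: "p \<in> obs" and pos: "proj_var m > 0"
  shows "distributed M lborel (\<lambda>w. proj_dev p m w + (\<Sum>k<d. T m k * mu (fst p) k))
           (\<lambda>x. ennreal (normal_density (\<Sum>k<d. T m k * mu (fst p) k) (sqrt (proj_var m)) x))"
proof -
  have nz: "\<exists>k<d. T m k \<noteq> 0"
  proof (rule ccontr)
    assume "\<not> (\<exists>k<d. T m k \<noteq> 0)"
    then have "proj_var m = 0"
      unfolding proj_var_def quad_form_def by simp
    with pos show False
      by simp
  qed
  have "fst p < a" "snd p < n (fst p)"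
    using p unfolding obs_def by auto
  then have "mvn M d (X (fst p) (snd p)) (mu (fst p)) S"
    using model unfolding model_def by auto
  moreover have "proj_dev p m w + (\<Sum>k<d. T m k * mu (fst p) k) = (\<Sum>k<d. T m k * X (fst p) (snd p) k w)" for w
    unfolding proj_dev_def by (simp add: right_diff_distrib sum_subtractf)
  ultimately show ?thesis
    using nz unfolding mvn_def proj_var_def by auto
qed

lemma proj_dev_moments:
  assumes p: "p \<in> obs"
  shows "integrable M (\<lambda>w. proj_dev p m w ^ k)"
    and "expectation (proj_dev p m) = 0"
    and "expectation (\<lambda>w. (proj_dev p m w)^2) = proj_var m"
    and "expectation (\<lambda>w. (proj_dev p m w)^4) = 3 * (proj_var m)^2"
proof -
  consider "proj_var m = 0" | "proj_var m > 0"
    using proj_var_nonneg[of m] by linarith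
  then have "integrable M (\<lambda>w. proj_dev p m w ^ k) \<and> expectation (proj_dev p m) = 0
      \<and> expectation (\<lambda>w. (proj_dev p m w)^2) = proj_var m
      \<and> expectation (\<lambda>w. (proj_dev p m w)^4) = 3 * (proj_var m)^2"
  proof cases
    case 1
    then have "proj_dev p m = (\<lambda>_. 0)"
      using proj_dev_eq_0[of m p] by auto
    with 1 show ?thesis
      by simp
  next
    case 2
    have "sqrt (proj_var m) ^ 4 = (proj_var m)^2"
      using 2 by (simp flip: power_mult add: numeral_eq_Suc)
    with normal_central_moments[OF proj_dev_shifted_normal[OF p 2]] 2 show ?thesis
      by simp
  qed
  then show "integrable M (\<lambda>w. proj_dev p m w ^ k)"
    and "expectation (proj_dev p m) = 0"
    and "expectation (\<lambda>w. (proj_dev p m w)^2) = proj_var m"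
    and "expectation (\<lambda>w. (proj_dev p m w)^4) = 3 * (proj_var m)^2"
    by auto
qed

lemma integrable_proj_dev: "p \<in> obs \<Longrightarrow> integrable M (proj_dev p m)"
  using proj_dev_moments(1)[of p m 1] by simp

lemma integrable_proj_dev_mult4:
  assumes "p1 \<in> obs" "p2 \<in> obs" "p3 \<in> obs" "p4 \<in> obs"
  shows "integrable M (\<lambda>w. proj_dev p1 m1 w * proj_dev p2 m2 w * proj_dev p3 m3 w * proj_dev p4 m4 w)"
  using assms by (intro integrable_mult4_if_power4 proj_dev_moments(1) proj_dev_measurable)

lemma integrable_proj_dev_mult3:
  assumes "p1 \<in> obs" "p2 \<in> obs" "p3 \<in> obs"
  shows "integrable M (\<lambda>w. proj_dev p1 m1 w * proj_dev p2 m2 w * proj_dev p3 m3 w)"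
  using integrable_mult4_if_power4[of "proj_dev p1 m1" M "proj_dev p2 m2" "proj_dev p3 m3" "\<lambda>_. 1"] assms
  by (simp add: proj_dev_moments(1))

lemma integrable_proj_dev_mult2:
  assumes "p1 \<in> obs" "p2 \<in> obs"
  shows "integrable M (\<lambda>w. proj_dev p1 m1 w * proj_dev p2 m2 w)"
  using integrable_mult4_if_power4[of "proj_dev p1 m1" M "proj_dev p2 m2" "\<lambda>_. 1" "\<lambda>_. 1"] assms
  by (simp add: proj_dev_moments(1))

lemma expectation_indep_obs_mult:
  fixes g :: "(nat \<Rightarrow> real) \<Rightarrow> real" and h :: "(nat \<times> nat \<Rightarrow> nat \<Rightarrow> real) \<Rightarrow> real"
  assumes e: "e \<in> obs" and J: "J \<subseteq> obs" "e \<notin> J"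
    and [measurable]: "g \<in> borel_measurable (PiM {..<d} (\<lambda>_. borel))"
    and [measurable]: "h \<in> borel_measurable (PiM J (\<lambda>_. PiM {..<d} (\<lambda>_. borel)))"
    and ig: "integrable M (\<lambda>w. g (obs_vec e w))"
    and ih: "integrable M (\<lambda>w. h (\<lambda>q\<in>J. obs_vec q w))"
  shows "expectation (\<lambda>w. g (obs_vec e w) * h (\<lambda>q\<in>J. obs_vec q w))
           = expectation (\<lambda>w. g (obs_vec e w)) * expectation (\<lambda>w. h (\<lambda>q\<in>J. obs_vec q w))"
proof -
  have "indep_var (PiM {e} (\<lambda>_. PiM {..<d} (\<lambda>_. borel))) (\<lambda>w. \<lambda>q\<in>{e}. obs_vec q w)
      (PiM J (\<lambda>_. PiM {..<d} (\<lambda>_. borel))) (\<lambda>w. \<lambda>q\<in>J. obs_vec q w)"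
    by (rule indep_var_restrict[OF indep_obs_vec]) (use e J in auto)
  then have "indep_var borel ((\<lambda>f. g (f e)) \<circ> (\<lambda>w. \<lambda>q\<in>{e}. obs_vec q w))
      borel (h \<circ> (\<lambda>w. \<lambda>q\<in>J. obs_vec q w))"
    by (rule indep_var_compose) measurable
  then have "indep_var borel (\<lambda>w. g (obs_vec e w)) borel (\<lambda>w. h (\<lambda>q\<in>J. obs_vec q w))"
    by (simp add: comp_def)
  from indep_var_lebesgue_integral[OF this ig ih] show ?thesis .
qed

lemma expectation_proj_dev_mult_indep:
  fixes h :: "(nat \<times> nat \<Rightarrow> nat \<Rightarrow> real) \<Rightarrow> real"
  assumes e: "e \<in> obs" and J: "J \<subseteq> obs" "e \<notin> J"
    and h: "h \<in> borel_measurable (PiM J (\<lambda>_. PiM {..<d} (\<lambda>_. borel)))"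
    and ih: "integrable M (\<lambda>w. h (\<lambda>q\<in>J. obs_vec q w))"
  shows "expectation (\<lambda>w. proj_dev e m w * h (\<lambda>q\<in>J. obs_vec q w)) = 0"
proof -
  have ig: "integrable M (\<lambda>w. proj_dev_of e m (obs_vec e w))"
    using integrable_proj_dev[OF e] unfolding proj_dev_eq[abs_def] .
  have "expectation (\<lambda>w. proj_dev_of e m (obs_vec e w)) = 0"
    using proj_dev_moments(2)[OF e] unfolding proj_dev_eq[abs_def] .
  with expectation_indep_obs_mult[OF e J proj_dev_of_measurable h ig ih] show ?thesis
    unfolding proj_dev_eq by (simp only: mult_zero_left)
qed

lemma expectation_proj_dev_mult4_single:
  assumes e: "e \<in> obs" and p: "p1 \<in> obs" "p2 \<in> obs" "p3 \<in> obs"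
    and ne: "e \<noteq> p1" "e \<noteq> p2" "e \<noteq> p3"
  shows "expectation (\<lambda>w. proj_dev e m w * (proj_dev p1 m1 w * proj_dev p2 m2 w * proj_dev p3 m3 w)) = 0"
proof -
  let ?h = "\<lambda>f. proj_dev_of p1 m1 (f p1) * proj_dev_of p2 m2 (f p2) * proj_dev_of p3 m3 (f p3)"
  have "?h \<in> borel_measurable (PiM {p1, p2, p3} (\<lambda>_. PiM {..<d} (\<lambda>_. borel)))"
    by measurable
  moreover have "integrable M (\<lambda>w. ?h (\<lambda>q\<in>{p1, p2, p3}. obs_vec q w))"
    using integrable_proj_dev_mult3[OF p] by (simp add: proj_dev_eq)
  ultimately have "expectation (\<lambda>w. proj_dev e m w * ?h (\<lambda>q\<in>{p1, p2, p3}. obs_vec q w)) = 0"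
    by (intro expectation_proj_dev_mult_indep[OF e]) (use p ne in auto)
  then show ?thesis
    by (simp add: proj_dev_eq)
qed

lemma expectation_proj_dev_mult_distinct:
  assumes "p \<in> obs" "q \<in> obs" "p \<noteq> q"
  shows "expectation (\<lambda>w. proj_dev p m w * proj_dev q m w) = 0"
proof -
  have "expectation (\<lambda>w. proj_dev p m w * (\<lambda>f. proj_dev_of q m (f q)) (\<lambda>q'\<in>{q}. obs_vec q' w)) = 0"
    by (rule expectation_proj_dev_mult_indep)
      (use assms in \<open>auto simp: proj_dev_eq[symmetric] integrable_proj_dev\<close>)
  then show ?thesis
    by (simp add: proj_dev_eq)
qed

lemma integrable_proj_sqnorm: "p \<in> obs \<Longrightarrow> integrable M (proj_sqnorm p)"
  unfolding proj_sqnorm_def by (intro Bochner_Integration.integrable_sum proj_dev_moments(1)) auto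

lemma expectation_proj_sqnorm: "p \<in> obs \<Longrightarrow> expectation (proj_sqnorm p) = tau"
  unfolding proj_sqnorm_def tau_eq_sum_proj_var
  by (subst Bochner_Integration.integral_sum)
    (auto intro!: sum.cong proj_dev_moments(1) simp: proj_dev_moments(3))

lemma integrable_proj_sqnorm_mult:
  "p \<in> obs \<Longrightarrow> q \<in> obs \<Longrightarrow> integrable M (\<lambda>w. proj_sqnorm p w * proj_sqnorm q w)"
  unfolding proj_sqnorm_def sum_product
  by (intro Bochner_Integration.integrable_sum)
    (auto simp: power2_eq_square mult.assoc[symmetric] intro!: integrable_proj_dev_mult4)

lemma expectation_proj_sqnorm_mult_distinct:
  assumes p: "p \<in> obs" and q: "q \<in> obs" and pq: "p \<noteq> q"
  shows "expectation (\<lambda>w. proj_sqnorm p w * proj_sqnorm q w) = tau^2"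
proof -
  define g where "g v = (\<Sum>m<d. (proj_dev_of p m v)^2)" for v
  define h where "h f = (\<Sum>m<d. (proj_dev_of q m (f q))^2)" for f :: "nat \<times> nat \<Rightarrow> nat \<Rightarrow> real"
  have sq_p: "proj_sqnorm p w = g (obs_vec p w)" and sq_q: "proj_sqnorm q w = h (\<lambda>q'\<in>{q}. obs_vec q' w)" for w
    unfolding g_def h_def proj_sqnorm_def by (simp_all add: proj_dev_eq)
  have meas: "g \<in> borel_measurable (PiM {..<d} (\<lambda>_. borel))"
      "h \<in> borel_measurable (PiM {q} (\<lambda>_. PiM {..<d} (\<lambda>_. borel)))"
    unfolding g_def h_def by measurable
  have "expectation (\<lambda>w. g (obs_vec p w) * h (\<lambda>q'\<in>{q}. obs_vec q' w))
      = expectation (\<lambda>w. g (obs_vec p w)) * expectation (\<lambda>w. h (\<lambda>q'\<in>{q}. obs_vec q' w))"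
  proof (rule expectation_indep_obs_mult[OF p _ _ meas])
    show "integrable M (\<lambda>w. g (obs_vec p w))"
      using integrable_proj_sqnorm[OF p] unfolding sq_p[abs_def] .
    show "integrable M (\<lambda>w. h (\<lambda>q'\<in>{q}. obs_vec q' w))"
      using integrable_proj_sqnorm[OF q] unfolding sq_q[abs_def] .
  qed (use q pq in auto)
  then show ?thesis
    using expectation_proj_sqnorm[OF p] expectation_proj_sqnorm[OF q]
    by (simp add: sq_p[symmetric] sq_q[symmetric] power2_eq_square)
qed

lemma expectation_proj_dev_sq_mult_sq_le:
  assumes p: "p \<in> obs"
  shows "expectation (\<lambda>w. (proj_dev p m w)^2 * (proj_dev p m' w)^2) \<le> 3 * proj_var m * proj_var m'"
proof (cases "proj_var m = 0 \<or> proj_var m' = 0")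
  case True
  then have "(\<lambda>w. (proj_dev p m w)^2 * (proj_dev p m' w)^2) = (\<lambda>w. 0)"
    by (auto simp: proj_dev_eq_0)
  then show ?thesis
    using proj_var_nonneg[of m] proj_var_nonneg[of m'] by simp
next
  case False
  then have pos: "proj_var m > 0" "proj_var m' > 0"
    using proj_var_nonneg[of m] proj_var_nonneg[of m'] by (simp_all add: less_le)
  define L where "L = proj_var m' / proj_var m"
  have L: "L > 0"
    unfolding L_def using pos by simp
  have int4: "integrable M (\<lambda>w. proj_dev p m w ^ 4)" "integrable M (\<lambda>w. proj_dev p m' w ^ 4)"
    using proj_dev_moments(1) p by auto
  text \<open>\<open>L\<close> is chosen so that the Gaussian fourth moments \<open>3 (proj_var m)\<^sup>2\<close> and
    \<open>3 (proj_var m')\<^sup>2\<close> contribute equally.\<close>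
  have "expectation (\<lambda>w. (proj_dev p m w)^2 * (proj_dev p m' w)^2)
      \<le> expectation (\<lambda>w. (L * (proj_dev p m w)^4 + (proj_dev p m' w)^4 / L) / 2)"
  proof (rule integral_mono)
    show "integrable M (\<lambda>w. (proj_dev p m w)^2 * (proj_dev p m' w)^2)"
      using integrable_proj_dev_mult4[of p p p p m m m' m'] p by (simp add: power2_eq_square mult.assoc)
    show "integrable M (\<lambda>w. (L * (proj_dev p m w)^4 + (proj_dev p m' w)^4 / L) / 2)"
      using int4 by auto
    show "(proj_dev p m w)^2 * (proj_dev p m' w)^2 \<le> (L * (proj_dev p m w)^4 + (proj_dev p m' w)^4 / L) / 2" for w
      using mult_le_weighted_squares[OF L, of "(proj_dev p m w)^2" "(proj_dev p m' w)^2"]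
      by (simp flip: power_mult)
  qed
  also have "\<dots> = (L * (3 * (proj_var m)^2) + 3 * (proj_var m')^2 / L) / 2"
    using int4 proj_dev_moments(4)[OF p, of m] proj_dev_moments(4)[OF p, of m'] by simp
  also have "\<dots> = 3 * proj_var m * proj_var m'"
    unfolding L_def using pos by (simp add: field_simps power2_eq_square)
  finally show ?thesis .
qed

lemma expectation_proj_sqnorm_sq_le:
  assumes p: "p \<in> obs"
  shows "expectation (\<lambda>w. (proj_sqnorm p w)^2) \<le> 3 * tau^2"
proof -
  have int: "integrable M (\<lambda>w. (proj_dev p m w)^2 * (proj_dev p m' w)^2)" for m m'
    using integrable_proj_dev_mult4[of p p p p m m m' m'] p by (simp add: power2_eq_square mult.assoc)
  have "expectation (\<lambda>w. (proj_sqnorm p w)^2)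
      = (\<Sum>m<d. \<Sum>m'<d. expectation (\<lambda>w. (proj_dev p m w)^2 * (proj_dev p m' w)^2))"
    unfolding proj_sqnorm_def power2_eq_square[of "sum _ _"] sum_product
    by (rule integral_sum_sum) (use int in auto)
  also have "\<dots> \<le> (\<Sum>m<d. \<Sum>m'<d. 3 * proj_var m * proj_var m')"
    by (intro sum_mono expectation_proj_dev_sq_mult_sq_le p)
  also have "\<dots> = 3 * tau^2"
    unfolding tau_eq_sum_proj_var power2_eq_square
    by (simp add: sum_distrib_left sum_distrib_right mult.assoc mult.commute[of "proj_var _" "proj_var _"])
  finally show ?thesis .
qed

lemma integrable_centred_sqnorm_mult:
  assumes "p \<in> obs" "q \<in> obs"
  shows "integrable M (\<lambda>w. (proj_sqnorm p w - tau) * (proj_sqnorm q w - tau))"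
proof -
  have "(\<lambda>w. (proj_sqnorm p w - tau) * (proj_sqnorm q w - tau))
      = (\<lambda>w. proj_sqnorm p w * proj_sqnorm q w - tau * proj_sqnorm p w - tau * proj_sqnorm q w + tau * tau)"
    by (auto simp: algebra_simps)
  then show ?thesis
    using assms integrable_proj_sqnorm_mult integrable_proj_sqnorm by auto
qed

lemma expectation_centred_sqnorm_mult:
  assumes p: "p \<in> obs" and q: "q \<in> obs"
  shows "expectation (\<lambda>w. (proj_sqnorm p w - tau) * (proj_sqnorm q w - tau))
      = expectation (\<lambda>w. proj_sqnorm p w * proj_sqnorm q w) - tau^2"
proof -
  have "(\<lambda>w. (proj_sqnorm p w - tau) * (proj_sqnorm q w - tau))
      = (\<lambda>w. proj_sqnorm p w * proj_sqnorm q w - tau * proj_sqnorm p w - tau * proj_sqnorm q w + tau * tau)"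
    by (auto simp: algebra_simps)
  then show ?thesis
    using integrable_proj_sqnorm_mult[OF p q] integrable_proj_sqnorm[OF p] integrable_proj_sqnorm[OF q]
      expectation_proj_sqnorm[OF p] expectation_proj_sqnorm[OF q]
    by (simp add: prob_space power2_eq_square)
qed

lemma integrable_proj_inner: "p \<in> obs \<Longrightarrow> q \<in> obs \<Longrightarrow> integrable M (proj_inner p q)"
  unfolding proj_inner_def by (intro Bochner_Integration.integrable_sum integrable_proj_dev_mult2) auto

lemma expectation_proj_inner: "p \<in> obs \<Longrightarrow> q \<in> obs \<Longrightarrow> p \<noteq> q \<Longrightarrow> expectation (proj_inner p q) = 0"
  unfolding proj_inner_def
  by (subst Bochner_Integration.integral_sum)
    (auto intro!: integrable_proj_dev_mult2 simp: expectation_proj_dev_mult_distinct)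

lemma integrable_proj_inner_mult:
  "p \<in> obs \<Longrightarrow> q \<in> obs \<Longrightarrow> u \<in> obs \<Longrightarrow> v \<in> obs \<Longrightarrow> integrable M (\<lambda>w. proj_inner p q w * proj_inner u v w)"
  unfolding proj_inner_def sum_product
  by (intro Bochner_Integration.integrable_sum) (auto simp: mult.assoc[symmetric] intro!: integrable_proj_dev_mult4)

lemma expectation_proj_inner_sq_le:
  assumes "p \<in> obs" "q \<in> obs" "p \<noteq> q"
  shows "expectation (\<lambda>w. proj_inner p q w * proj_inner p q w) \<le> tau^2"
proof -
  have "expectation (\<lambda>w. proj_inner p q w * proj_inner p q w) \<le> expectation (\<lambda>w. proj_sqnorm p w * proj_sqnorm q w)"
  proof (rule integral_mono)
    show "integrable M (\<lambda>w. proj_inner p q w * proj_inner p q w)"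
      using integrable_proj_inner_mult assms by auto
    show "integrable M (\<lambda>w. proj_sqnorm p w * proj_sqnorm q w)"
      using integrable_proj_sqnorm_mult assms by auto
    show "proj_inner p q w * proj_inner p q w \<le> proj_sqnorm p w * proj_sqnorm q w" for w
      using Cauchy_Schwarz_ineq_sum[of "\<lambda>m. proj_dev p m w" "\<lambda>m. proj_dev q m w" "{..<d}"]
      unfolding proj_inner_def proj_sqnorm_def by (simp add: power2_eq_square)
  qed
  also have "\<dots> = tau^2"
    using expectation_proj_sqnorm_mult_distinct assms by auto
  finally show ?thesis .
qed

lemma expectation_proj_inner_mult:
  assumes obs: "p \<in> obs" "q \<in> obs" "u \<in> obs" "v \<in> obs" and pq: "p \<noteq> q"
    and single: "p \<notin> {u, v} \<or> q \<notin> {u, v}"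
  shows "expectation (\<lambda>w. proj_inner p q w * proj_inner u v w) = 0"
proof -
  have term_0: "expectation (\<lambda>w. (proj_dev p m w * proj_dev q m w) * (proj_dev u m' w * proj_dev v m' w)) = 0"
    for m m'
  proof (cases "p \<notin> {u, v}")
    case True
    have "expectation (\<lambda>w. proj_dev p m w * (proj_dev q m w * proj_dev u m' w * proj_dev v m' w)) = 0"
      by (rule expectation_proj_dev_mult4_single) (use obs pq True in auto)
    then show ?thesis
      by (simp add: mult_ac)
  next
    case False
    then have "q \<notin> {u, v}"
      using single by auto
    then have "expectation (\<lambda>w. proj_dev q m w * (proj_dev p m w * proj_dev u m' w * proj_dev v m' w)) = 0"
      by (intro expectation_proj_dev_mult4_single) (use obs pq in auto)
    then show ?thesis
      by (simp add: mult_ac)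
  qed
  have int: "integrable M (\<lambda>w. (proj_dev p m w * proj_dev q m w) * (proj_dev u m' w * proj_dev v m' w))"
    for m m'
    using integrable_proj_dev_mult4[of p q u v m m m' m'] obs by (simp add: mult.assoc)
  have "expectation (\<lambda>w. proj_inner p q w * proj_inner u v w)
      = (\<Sum>m<d. \<Sum>m'<d. expectation (\<lambda>w. (proj_dev p m w * proj_dev q m w) * (proj_dev u m' w * proj_dev v m' w)))"
    unfolding proj_inner_def sum_product by (rule integral_sum_sum) (use int in auto)
  also have "\<dots> = 0"
    using term_0 by simp
  finally show ?thesis .
qed

definition "denom = (\<Sum>i<a. real (n i - 1) * real (n i))"

definition "weight p = real (n (fst p) - 1)"

definition "within_pairs = {((i, l1), (i, l2)) | i l1 l2. i < a \<and> l1 < l2 \<and> l2 < n i}"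

definition "diag_term w = (\<Sum>p\<in>obs. weight p * (proj_sqnorm p w - tau))"

definition "cross_term w = (\<Sum>t\<in>within_pairs. proj_inner (fst t) (snd t) w)"

lemma quad_form_T_diff:
  "(\<Sum>k<d. \<Sum>l<d. (X i l1 k w - X i l2 k w) * T k l * (X i l1 l w - X i l2 l w))
     = proj_sqnorm (i, l1) w + proj_sqnorm (i, l2) w - 2 * proj_inner (i, l1) (i, l2) w"
proof -
  define D where "D k = X i l1 k w - X i l2 k w" for k
  have dev_diff: "proj_dev (i, l1) m w - proj_dev (i, l2) m w = (\<Sum>k<d. T m k * D k)" for m
    unfolding proj_dev_def D_def by (simp add: sum_subtractf[symmetric] algebra_simps)
  have "proj_sqnorm (i, l1) w + proj_sqnorm (i, l2) w - 2 * proj_inner (i, l1) (i, l2) w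
      = (\<Sum>m<d. (proj_dev (i, l1) m w - proj_dev (i, l2) m w)^2)"
    unfolding proj_sqnorm_def proj_inner_def
    by (simp add: power2_diff sum.distrib sum_subtractf sum_distrib_left mult.assoc)
  also have "\<dots> = (\<Sum>m<d. \<Sum>k<d. \<Sum>l<d. D k * D l * (T m k * T m l))"
    by (simp add: dev_diff power2_eq_square sum_product mult_ac)
  also have "\<dots> = (\<Sum>k<d. \<Sum>l<d. \<Sum>m<d. D k * D l * (T m k * T m l))"
    by (subst sum.swap) (intro sum.cong refl sum.swap)
  also have "\<dots> = (\<Sum>k<d. \<Sum>l<d. D k * D l * (\<Sum>m<d. T k m * T m l))"
    by (intro sum.cong refl) (auto simp: sum_distrib_left T_sym)
  also have "\<dots> = (\<Sum>k<d. \<Sum>l<d. D k * T k l * D l)"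
    by (intro sum.cong refl) (auto simp: T_idem)
  finally show ?thesis
    unfolding D_def by simp
qed

lemma sum_obs: "(\<Sum>i<a. \<Sum>j<n i. f (i, j)) = (\<Sum>p\<in>obs. (f p :: real))"
  unfolding obs_def by (subst sum.Sigma) auto

lemma within_pairs_eq:
  "within_pairs = (\<lambda>(i, l2, l1). ((i, l1), (i, l2))) ` (SIGMA i:{..<a}. SIGMA l2:{..<n i}. {..<l2})"
  unfolding within_pairs_def by force

lemma sum_within_pairs:
  "(\<Sum>t\<in>within_pairs. f t) = (\<Sum>i<a. \<Sum>l2<n i. \<Sum>l1<l2. (f ((i, l1), (i, l2)) :: real))"
proof -
  have inj: "inj_on (\<lambda>(i, l2, l1). ((i, l1), (i, l2))) (SIGMA i:{..<a}. SIGMA l2:{..<n i}. {..<l2})"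
    by (auto simp: inj_on_def)
  have "(\<Sum>t\<in>within_pairs. f t)
      = (\<Sum>(i, l2, l1)\<in>(SIGMA i:{..<a}. SIGMA l2:{..<n i}. {..<l2}). f ((i, l1), (i, l2)))"
    unfolding within_pairs_eq sum.reindex[OF inj] by (simp add: split_def)
  also have "\<dots> = (\<Sum>i<a. \<Sum>l2<n i. \<Sum>l1<l2. f ((i, l1), (i, l2)))"
    by (simp add: sum.Sigma[symmetric])
  finally show ?thesis .
qed

lemma finite_within_pairs [simp]: "finite within_pairs"
  unfolding within_pairs_eq by auto

lemma within_pairs_obs: "t \<in> within_pairs \<Longrightarrow> fst t \<in> obs \<and> snd t \<in> obs \<and> fst t \<noteq> snd t"
  unfolding within_pairs_def obs_def by auto

lemma within_pairs_share_one:
  "s \<in> within_pairs \<Longrightarrow> t \<in> within_pairs \<Longrightarrow> s \<noteq> t \<Longrightarrow> fst s \<notin> {fst t, snd t} \<or> snd s \<notin> {fst t, snd t}"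
  unfolding within_pairs_def by auto

lemma denom_eq_sum: "denom = (\<Sum>i<a. \<Sum>j<n i. real (n i - 1))"
  unfolding denom_def by (simp only: sum_constant card_lessThan of_nat_id mult.commute)

lemma sum_weight: "(\<Sum>p\<in>obs. weight p) = denom"
  unfolding denom_eq_sum sum_obs[symmetric] weight_def by simp

lemma N_le_denom: "real (\<Sum>i<a. n i) \<le> denom"
  unfolding denom_def of_nat_sum
proof (rule sum_mono)
  fix i assume "i \<in> {..<a}"
  then have "n i \<ge> 2"
    using n_ge2 by auto
  then show "real (n i) \<le> real (n i - 1) * real (n i)"
    by (simp add: of_nat_diff algebra_simps)
qed

lemma N_pos: "real (\<Sum>i<a. n i) > 0"
proof -
  have "n 0 \<le> (\<Sum>i<a. n i)"
    using a_pos by (intro member_le_sum) auto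
  moreover have "n 0 \<ge> 2"
    using n_ge2 a_pos by auto
  ultimately have "(\<Sum>i<a. n i) > 0"
    by linarith
  then show ?thesis
    by (simp only: of_nat_0_less_iff)
qed

lemma denom_pos: "denom > 0"
  using N_le_denom N_pos by linarith

lemma estA1_decomp: "estA1 a d n T X w = tau + (diag_term w - 2 * cross_term w) / denom"
proof -
  have "(\<Sum>i<a. \<Sum>l2<n i. \<Sum>l1<l2.
          \<Sum>k<d. \<Sum>l<d. (X i l1 k w - X i l2 k w) * T k l * (X i l1 l w - X i l2 l w))
      = (\<Sum>i<a. \<Sum>l2<n i. \<Sum>l1<l2. (proj_sqnorm (i, l1) w + proj_sqnorm (i, l2) w)
                                       - 2 * proj_inner (i, l1) (i, l2) w)"
    by (simp add: quad_form_T_diff)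
  also have "\<dots> = (\<Sum>i<a. real (n i - 1) * (\<Sum>j<n i. proj_sqnorm (i, j) w))
                  - 2 * (\<Sum>i<a. \<Sum>l2<n i. \<Sum>l1<l2. proj_inner (i, l1) (i, l2) w)"
    by (simp add: sum_subtractf sum_distrib_left sum_lower_pairs_add)
  also have "\<dots> = (\<Sum>p\<in>obs. weight p * proj_sqnorm p w) - 2 * cross_term w"
    using sum_obs[of "\<lambda>p. weight p * proj_sqnorm p w"]
    by (simp add: weight_def cross_term_def sum_within_pairs[of "\<lambda>t. proj_inner (fst t) (snd t) w"] sum_distrib_left)
  also have "\<dots> = denom * tau + diag_term w - 2 * cross_term w"
    unfolding diag_term_def sum_weight[symmetric]
    by (simp add: right_diff_distrib sum_subtractf sum_distrib_right)
  finally show ?thesis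
    using denom_pos unfolding estA1_def denom_def[symmetric] by (simp add: field_simps)
qed

lemma integrable_diag_term: "integrable M diag_term"
  unfolding diag_term_def[abs_def] using integrable_proj_sqnorm by auto

lemma expectation_diag_term: "expectation diag_term = 0"
  unfolding diag_term_def[abs_def] using integrable_proj_sqnorm expectation_proj_sqnorm
  by (simp add: Bochner_Integration.integral_sum prob_space)

lemma integrable_cross_term: "integrable M cross_term"
  unfolding cross_term_def[abs_def] using within_pairs_obs integrable_proj_inner by auto

lemma expectation_cross_term: "expectation cross_term = 0"
  unfolding cross_term_def[abs_def] using within_pairs_obs integrable_proj_inner expectation_proj_inner
  by (subst Bochner_Integration.integral_sum) auto

lemma estA1_eq_decomp: "estA1 a d n T X = (\<lambda>w. tau + (diag_term w - 2 * cross_term w) / denom)"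
  using estA1_decomp by (rule ext)

lemma expectation_estA1: "expectation (estA1 a d n T X) = tau"
  unfolding estA1_eq_decomp
  using integrable_diag_term integrable_cross_term expectation_diag_term expectation_cross_term
  by (simp add: Bochner_Integration.integral_add Bochner_Integration.integral_diff prob_space)

lemma expectation_centred_sqnorm_sq_le:
  assumes "p \<in> obs"
  shows "expectation (\<lambda>w. (proj_sqnorm p w - tau) * (proj_sqnorm p w - tau)) \<le> 2 * tau^2"
  using expectation_centred_sqnorm_mult[OF assms assms] expectation_proj_sqnorm_sq_le[OF assms]
  by (simp add: power2_eq_square)

lemma expectation_diag_term_sq_le:
  shows "integrable M (\<lambda>w. (diag_term w)^2)"
    and "expectation (\<lambda>w. (diag_term w)^2) \<le> 2 * tau^2 * (\<Sum>p\<in>obs. (weight p)^2)"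
proof -
  let ?f = "\<lambda>p w. weight p * (proj_sqnorm p w - tau)"
  have int: "integrable M (\<lambda>w. ?f p w * ?f q w)" if "p \<in> obs" "q \<in> obs" for p q
    using integrable_centred_sqnorm_mult[OF that] by (simp add: mult_ac)
  have orth: "expectation (\<lambda>w. ?f p w * ?f q w) = 0" if "p \<in> obs" "q \<in> obs" "p \<noteq> q" for p q
  proof -
    have "expectation (\<lambda>w. ?f p w * ?f q w)
        = weight p * weight q * expectation (\<lambda>w. (proj_sqnorm p w - tau) * (proj_sqnorm q w - tau))"
      by (simp add: mult_ac)
    also have "\<dots> = 0"
      using that by (simp add: expectation_centred_sqnorm_mult expectation_proj_sqnorm_mult_distinct)
    finally show ?thesis .
  qed
  show "integrable M (\<lambda>w. (diag_term w)^2)"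
    unfolding diag_term_def using integral_square_sum_orthogonal(1)[OF finite_obs int orth] .
  have "expectation (\<lambda>w. (diag_term w)^2) = (\<Sum>p\<in>obs. expectation (\<lambda>w. (?f p w)^2))"
    unfolding diag_term_def using integral_square_sum_orthogonal(2)[OF finite_obs int orth] .
  also have "\<dots> = (\<Sum>p\<in>obs. (weight p)^2 * expectation (\<lambda>w. (proj_sqnorm p w - tau) * (proj_sqnorm p w - tau)))"
    by (simp add: power2_eq_square mult_ac)
  also have "\<dots> \<le> (\<Sum>p\<in>obs. (weight p)^2 * (2 * tau^2))"
    by (intro sum_mono mult_left_mono expectation_centred_sqnorm_sq_le) auto
  also have "\<dots> = 2 * tau^2 * (\<Sum>p\<in>obs. (weight p)^2)"
    by (simp add: sum_distrib_left mult_ac)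
  finally show "expectation (\<lambda>w. (diag_term w)^2) \<le> 2 * tau^2 * (\<Sum>p\<in>obs. (weight p)^2)" .
qed

lemma expectation_cross_term_sq_le:
  shows "integrable M (\<lambda>w. (cross_term w)^2)"
    and "expectation (\<lambda>w. (cross_term w)^2) \<le> tau^2 * card within_pairs"
proof -
  let ?f = "\<lambda>t w. proj_inner (fst t) (snd t) w"
  have cross: "cross_term w = (\<Sum>t\<in>within_pairs. ?f t w)" for w
    unfolding cross_term_def ..
  have int: "integrable M (\<lambda>w. ?f s w * ?f t w)" if "s \<in> within_pairs" "t \<in> within_pairs" for s t
    using that within_pairs_obs integrable_proj_inner_mult by blast
  have orth: "expectation (\<lambda>w. ?f s w * ?f t w) = 0"
    if "s \<in> within_pairs" "t \<in> within_pairs" "s \<noteq> t" for s t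
    using within_pairs_obs[OF that(1)] within_pairs_obs[OF that(2)] within_pairs_share_one[OF that]
    by (intro expectation_proj_inner_mult) auto
  show "integrable M (\<lambda>w. (cross_term w)^2)"
    unfolding cross using integral_square_sum_orthogonal(1)[OF finite_within_pairs int orth] .
  have "expectation (\<lambda>w. (cross_term w)^2) = (\<Sum>t\<in>within_pairs. expectation (\<lambda>w. (?f t w)^2))"
    unfolding cross using integral_square_sum_orthogonal(2)[OF finite_within_pairs int orth] .
  also have "\<dots> \<le> (\<Sum>t\<in>within_pairs. tau^2)"
    using within_pairs_obs expectation_proj_inner_sq_le
    by (intro sum_mono) (auto simp: power2_eq_square)
  finally show "expectation (\<lambda>w. (cross_term w)^2) \<le> tau^2 * card within_pairs"
    by (simp add: mult.commute)
qed

lemma sum_weight_sq_le: "(\<Sum>p\<in>obs. (weight p)^2) \<le> denom * sqrt denom"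
proof -
  have "weight p \<le> sqrt denom" if p: "p \<in> obs" for p
  proof (rule real_le_rsqrt)
    have i: "fst p < a"
      using p unfolding obs_def by auto
    have "(weight p)^2 \<le> real (n (fst p) - 1) * real (n (fst p))"
      unfolding weight_def power2_eq_square by (intro mult_left_mono) auto
    also have "\<dots> \<le> denom"
      unfolding denom_def by (rule member_le_sum) (use i in auto)
    finally show "(weight p)^2 \<le> denom" .
  qed
  then have "(\<Sum>p\<in>obs. (weight p)^2) \<le> (\<Sum>p\<in>obs. weight p * sqrt denom)"
    unfolding power2_eq_square by (intro sum_mono mult_left_mono) (auto simp: weight_def)
  also have "\<dots> = denom * sqrt denom"
    by (simp add: sum_distrib_right[symmetric] sum_weight)
  finally show ?thesis .
qed

lemma card_within_pairs_le: "real (card within_pairs) \<le> denom"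
proof -
  have "card within_pairs = (\<Sum>t\<in>within_pairs. 1::real)"
    by simp
  also have "\<dots> = (\<Sum>i<a. \<Sum>l2<n i. real l2)"
    unfolding sum_within_pairs by simp
  also have "\<dots> \<le> (\<Sum>i<a. \<Sum>l2<n i. real (n i - 1))"
    by (intro sum_mono) auto
  also have "\<dots> = denom"
    by (simp add: denom_eq_sum)
  finally show ?thesis .
qed

lemma expectation_decomp_error_sq_le:
  shows "integrable M (\<lambda>w. (diag_term w - 2 * cross_term w)^2)"
    and "expectation (\<lambda>w. (diag_term w - 2 * cross_term w)^2) \<le> tau^2 * (4 * denom * sqrt denom + 8 * denom)"
proof -
  have [measurable]: "diag_term \<in> borel_measurable M" "cross_term \<in> borel_measurable M"
    using integrable_diag_term integrable_cross_term by (simp_all add: borel_measurable_integrable)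
  have le: "(diag_term w - 2 * cross_term w)^2 \<le> 2 * (diag_term w)^2 + 8 * (cross_term w)^2" for w
    using sum_squares_bound[of "diag_term w" "- 2 * cross_term w"]
    by (simp add: power2_diff power_mult_distrib)
  have int_bound: "integrable M (\<lambda>w. 2 * (diag_term w)^2 + 8 * (cross_term w)^2)"
    using expectation_diag_term_sq_le(1) expectation_cross_term_sq_le(1) by auto
  show int: "integrable M (\<lambda>w. (diag_term w - 2 * cross_term w)^2)"
  proof (rule Bochner_Integration.integrable_bound[OF int_bound])
    show "AE w in M. norm ((diag_term w - 2 * cross_term w)^2)
        \<le> norm (2 * (diag_term w)^2 + 8 * (cross_term w)^2)"
      using le by (intro AE_I2) simp
  qed measurable
  have "expectation (\<lambda>w. (diag_term w - 2 * cross_term w)^2)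
      \<le> expectation (\<lambda>w. 2 * (diag_term w)^2 + 8 * (cross_term w)^2)"
    by (intro integral_mono int int_bound le)
  also have "\<dots> = 2 * expectation (\<lambda>w. (diag_term w)^2) + 8 * expectation (\<lambda>w. (cross_term w)^2)"
    using expectation_diag_term_sq_le(1) expectation_cross_term_sq_le(1) by simp
  also have "\<dots> \<le> 2 * (2 * tau^2 * (denom * sqrt denom)) + 8 * (tau^2 * denom)"
  proof (intro add_mono mult_left_mono)
    show "expectation (\<lambda>w. (diag_term w)^2) \<le> 2 * tau^2 * (denom * sqrt denom)"
      using expectation_diag_term_sq_le(2) sum_weight_sq_le
      by (rule order_trans[OF _ mult_left_mono]) simp
    show "expectation (\<lambda>w. (cross_term w)^2) \<le> tau^2 * denom"
      using expectation_cross_term_sq_le(2) card_within_pairs_le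
      by (rule order_trans[OF _ mult_left_mono]) simp
  qed simp_all
  finally show "expectation (\<lambda>w. (diag_term w - 2 * cross_term w)^2)
      \<le> tau^2 * (4 * denom * sqrt denom + 8 * denom)"
    by (simp add: algebra_simps)
qed

lemma estA1_mean_square_error:
  shows "integrable M (\<lambda>w. (estA1 a d n T X w)^2)"
    and "expectation (\<lambda>w. (estA1 a d n T X w - tau)^2) \<le> tau^2 * (4 / sqrt denom + 8 / denom)"
proof -
  define err where "err w = diag_term w - 2 * cross_term w" for w
  note err_sq = expectation_decomp_error_sq_le[folded err_def]
  have estA1: "estA1 a d n T X w = tau + err w / denom" for w
    unfolding err_def by (rule estA1_decomp)
  have "(\<lambda>w. (estA1 a d n T X w)^2) = (\<lambda>w. tau^2 + (2 * tau / denom) * err w + (err w)^2 / denom^2)"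
    unfolding estA1 using denom_pos by (auto simp: power2_eq_square field_simps)
  then show "integrable M (\<lambda>w. (estA1 a d n T X w)^2)"
    using err_sq(1) integrable_diag_term integrable_cross_term unfolding err_def by simp
  have "expectation (\<lambda>w. (estA1 a d n T X w - tau)^2) = expectation (\<lambda>w. (err w)^2) / denom^2"
    unfolding estA1 by (simp add: power_divide)
  also have "\<dots> \<le> tau^2 * (4 * denom * sqrt denom + 8 * denom) / denom^2"
    using err_sq(2) by (rule divide_right_mono) simp
  also have "\<dots> = tau^2 * (4 / sqrt denom + 8 / denom)"
  proof -
    have "sqrt denom * sqrt denom = denom"
      using denom_pos by simp
    then show ?thesis
      using denom_pos by (simp add: field_simps power2_eq_square)
  qed
  finally show "expectation (\<lambda>w. (estA1 a d n T X w - tau)^2) \<le> tau^2 * (4 / sqrt denom + 8 / denom)" .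
qed

lemma estA1_tail_bound:
  assumes e: "e > 0"
  defines "N \<equiv> real (\<Sum>i<a. n i)"
  shows "measure M {w \<in> space M. \<bar>estA1 a d n T X w / tau - 1\<bar> > e} \<le> (4 / sqrt N + 8 / N) / e^2"
proof -
  have "integrable M (estA1 a d n T X)"
    unfolding estA1_eq_decomp using integrable_diag_term integrable_cross_term by simp
  then have [measurable]: "estA1 a d n T X \<in> borel_measurable M"
    by (rule borel_measurable_integrable)
  have "{w \<in> space M. \<bar>estA1 a d n T X w / tau - 1\<bar> > e}
      \<subseteq> {w \<in> space M. \<bar>estA1 a d n T X w - expectation (estA1 a d n T X)\<bar> \<ge> e * tau}"
    using tau_pos by (auto simp: expectation_estA1 field_simps abs_div abs_if split: if_splits)
  then have "measure M {w \<in> space M. \<bar>estA1 a d n T X w / tau - 1\<bar> > e}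
      \<le> measure M {w \<in> space M. \<bar>estA1 a d n T X w - expectation (estA1 a d n T X)\<bar> \<ge> e * tau}"
    by (intro finite_measure_mono) measurable
  also have "\<dots> \<le> variance (estA1 a d n T X) / (e * tau)^2"
    using estA1_mean_square_error(1) e tau_pos by (intro Chebyshev_inequality) auto
  also have "\<dots> \<le> tau^2 * (4 / sqrt denom + 8 / denom) / (e * tau)^2"
    using estA1_mean_square_error(2) by (intro divide_right_mono) (simp_all add: expectation_estA1)
  also have "\<dots> = (4 / sqrt denom + 8 / denom) / e^2"
    using tau_pos by (simp add: power_mult_distrib)
  also have "\<dots> \<le> (4 / sqrt N + 8 / N) / e^2"
    using N_pos N_le_denom unfolding N_def
    by (intro divide_right_mono add_mono divide_left_mono real_sqrt_le_mono) auto
  finally show ?thesis .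
qed

end

theorem mainTheorem2:
  fixes M :: "nat \<Rightarrow> 'w measure"
    and a d :: "nat \<Rightarrow> nat"
    and n :: "nat \<Rightarrow> nat \<Rightarrow> nat"
    and X :: "nat \<Rightarrow> nat \<Rightarrow> nat \<Rightarrow> nat \<Rightarrow> 'w \<Rightarrow> real"
    and mu :: "nat \<Rightarrow> nat \<Rightarrow> nat \<Rightarrow> real"
    and S T :: "nat \<Rightarrow> nat \<Rightarrow> nat \<Rightarrow> real"
  assumes model: "\<And>\<nu>. model (M \<nu>) (a \<nu>) (d \<nu>) (n \<nu>) (X \<nu>) (mu \<nu>) (S \<nu>)"
    and a_pos: "\<And>\<nu>. a \<nu> \<ge> 1"
    and n_ge2: "\<And>\<nu> i. i < a \<nu> \<Longrightarrow> n \<nu> i \<ge> 2"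
    and T: "\<And>\<nu>. sym_idempotent_nonzero (d \<nu>) (T \<nu>)"
  shows "(\<forall>\<nu>. prob_space.expectation (M \<nu>) (estA1 (a \<nu>) (d \<nu>) (n \<nu>) (T \<nu>) (X \<nu>))
                = trace_prod (d \<nu>) (T \<nu>) (S \<nu>))
     \<and> (asymptotic_framework a d n \<longrightarrow>
          conv_in_prob M (\<lambda>\<nu> w. estA1 (a \<nu>) (d \<nu>) (n \<nu>) (T \<nu>) (X \<nu>) w
                                 / trace_prod (d \<nu>) (T \<nu>) (S \<nu>)) 1)"
proof -
  have inst: "grouped_normal_model (M \<nu>) (a \<nu>) (d \<nu>) (n \<nu>) (X \<nu>) (mu \<nu>) (S \<nu>) (T \<nu>)" for \<nu>
    using model a_pos n_ge2 T
    by (simp add: grouped_normal_model_def grouped_normal_model_axioms_def model_def)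
  note tau = grouped_normal_model.tau_def[OF inst]
  show ?thesis
  proof (intro conjI allI impI)
    show "prob_space.expectation (M \<nu>) (estA1 (a \<nu>) (d \<nu>) (n \<nu>) (T \<nu>) (X \<nu>))
        = trace_prod (d \<nu>) (T \<nu>) (S \<nu>)" for \<nu>
      using grouped_normal_model.expectation_estA1[OF inst] by (simp add: tau)
  next
    assume "asymptotic_framework a d n"
    then have "filterlim (\<lambda>\<nu>. \<Sum>i<a \<nu>. n \<nu> i) at_top sequentially"
      unfolding asymptotic_framework_def tends_inf_def Let_def by auto
    then have "filterlim (\<lambda>\<nu>. real (\<Sum>i<a \<nu>. n \<nu> i)) at_top sequentially"
      by (rule filterlim_compose[OF filterlim_real_sequentially])
    then have "(\<lambda>\<nu>. 4 / sqrt (real (\<Sum>i<a \<nu>. n \<nu> i)) + 8 / real (\<Sum>i<a \<nu>. n \<nu> i)) \<longlonglongrightarrow> 0"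
      by (rule tendsto_div_sqrt_add_div_at_top)
    then show "conv_in_prob M (\<lambda>\<nu> w. estA1 (a \<nu>) (d \<nu>) (n \<nu>) (T \<nu>) (X \<nu>) w
        / trace_prod (d \<nu>) (T \<nu>) (S \<nu>)) 1"
      using grouped_normal_model.estA1_tail_bound[OF inst]
      by (intro conv_in_prob_if_Chebyshev_bound) (simp_all add: tau)
  qed
qed

end
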